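(* Let $\mathrm R(t,s):=\sin\left(\frac{\pi}{2}t\right)\frac{s+\sqrt{8-s^2}}{2\sqrt2}$ on $[0,1]\times[2,2\sqrt2]$ and let $\widehat{\mathrm R}$ be its concave envelope on this domain. For $(t,s)\in(0,1]\times[2,2\sqrt2]$, writing $\epsilon=1-\frac{s}{2\sqrt2}$, one has $\mathrm R(t,s)=\widehat{\mathrm R}(t,s)$ if and only if $$\frac{\tan\left(\frac{\pi}{2}t\right)}{\frac{\pi}{2}t}\ \ge\ \frac{2+\sqrt{(2-\epsilon)\epsilon}-\epsilon(5-2\epsilon)}{2(1-\epsilon)}$$ (with the left side interpreted as $+\infty$ at $t=1$). Moreover, this condition is implied by $\frac{\frac{\pi}{2}t}{\sin(\frac{\pi}{2}t)}\ge \frac{s+\sqrt{8-s^2}}{2\sqrt2}$, i.e. by $\frac{\pi}{2}t\ge \mathrm R(t,s)$.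
   Context: The concave envelope of a function $F$ on a convex domain $D$ is the pointwise smallest concave function $\widehat F:D\to\mathbb R$ with $\widehat F\ge F$ on $D$. *)

theory Defs
  imports "HOL-Analysis.Analysis"
begin

definition concave_envelope :: "'a::real_vector set \<Rightarrow> ('a \<Rightarrow> real) \<Rightarrow> 'a \<Rightarrow> real" where
  "concave_envelope D F x = Inf {g x | g. concave_on D g \<and> (\<forall>y\<in>D. F y \<le> g y)}"

definition RR :: "real \<times> real \<Rightarrow> real" where
  "RR p = sin (pi / 2 * fst p) * (snd p + sqrt (8 - (snd p)\<^sup>2)) / (2 * sqrt 2)"

definition domR :: "(real \<times> real) set" where
  "domR = {0..1} \<times> {2..2 * sqrt 2}"

end

theory Submission
  imports Defs
begin

text \<open>Write \<open>x = \<pi>t/2\<close> and \<open>s = 2\<surd>2 cos \<psi>\<close>, so that \<open>RR (t, s) = sin x (cos \<psi> + sin \<psi>)\<close>; below,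
\<open>c\<close> and \<open>sn\<close> stand for \<open>cos \<psi>\<close> and \<open>sin \<psi>\<close> at the point under consideration.

If \<open>ray_derivative x c sn \<ge> 0\<close>, the tangent plane of \<open>RR\<close> at \<open>(t, s)\<close> lies above \<open>RR\<close>. In the
coordinates \<open>(u, \<psi>)\<close> it reads \<open>a\<^sub>0 + a\<^sub>1 u - d cos \<psi>\<close>, and by Cauchy--Schwarz it suffices that
\<open>\<surd>((sin u + d)\<^sup>2 + sin\<^sup>2 u) \<le> a\<^sub>0 + a\<^sub>1 u\<close> on \<open>[0, \<pi>/2]\<close>. The left side is convex and then concave
in \<open>u\<close>, so it stays below its tangent line at \<open>u = x\<close> as soon as it does so at \<open>u = 0\<close>; this is the
sign condition \<open>d \<le> a\<^sub>0\<close>.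

If \<open>ray_derivative x c sn < 0\<close>, write \<open>(t, s) = (1 - m) e + m q\<^sub>m\<close> with \<open>e = (0, 2\<surd>2)\<close>, where \<open>RR\<close>
vanishes. Then \<open>m RR q\<^sub>m\<close> is a lower bound for the envelope at \<open>(t, s)\<close>, and \<open>ray_derivative x c sn\<close>
is its derivative at \<open>m = 1\<close>, so for \<open>m\<close> slightly below \<open>1\<close> the envelope exceeds \<open>RR (t, s)\<close>.

The top edge \<open>s = 2\<surd>2\<close> is supported by \<open>sin x + cos x (u - x) + sin \<psi>\<close>. The rest is algebra
relating the sign of \<open>ray_derivative\<close> to the tangent condition, together with
\<open>x\<^sup>2 cos x \<le> sin\<^sup>2 x\<close> for the sufficient condition.\<close>

section \<open>Concave envelopes\<close>

lemma concave_envelope_eqI: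
  fixes D :: "'a::real_vector set"
  assumes "p \<in> D" "concave_on D g" "\<And>y. y \<in> D \<Longrightarrow> F y \<le> g y" "g p = F p"
  shows "concave_envelope D F p = F p"
  unfolding concave_envelope_def
proof (rule cInf_eq_minimum)
  show "F p \<in> {g p |g. concave_on D g \<and> (\<forall>y\<in>D. F y \<le> g y)}"
    using assms(2-4) by (intro CollectI exI[of _ g]) auto
qed (use assms(1) in auto)

lemma concave_envelope_ge_convex_combination:
  fixes D :: "'a::real_vector set"
  assumes "convex D" "\<And>y. y \<in> D \<Longrightarrow> F y \<le> B" "e \<in> D" "q \<in> D" "0 \<le> m" "m \<le> 1"
  shows "(1 - m) * F e + m * F q \<le> concave_envelope D F ((1 - m) *\<^sub>R e + m *\<^sub>R q)"
  unfolding concave_envelope_def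
proof (rule cInf_greatest)
  have "B \<in> {g ((1 - m) *\<^sub>R e + m *\<^sub>R q) |g. concave_on D g \<and> (\<forall>y\<in>D. F y \<le> g y)}"
    using assms(1,2) by (intro CollectI exI[of _ "\<lambda>_. B"]) (auto simp: concave_on_const)
  thus "{g ((1 - m) *\<^sub>R e + m *\<^sub>R q) |g. concave_on D g \<and> (\<forall>y\<in>D. F y \<le> g y)} \<noteq> {}"
    by blast
next
  fix z assume "z \<in> {g ((1 - m) *\<^sub>R e + m *\<^sub>R q) |g. concave_on D g \<and> (\<forall>y\<in>D. F y \<le> g y)}"
  then obtain g where g: "concave_on D g" "\<forall>y\<in>D. F y \<le> g y" and z: "z = g ((1 - m) *\<^sub>R e + m *\<^sub>R q)"
    by blast
  have "(1 - m) * F e + m * F q \<le> (1 - m) * g e + m * g q"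
    using g(2) assms(3-6) by (intro add_mono mult_left_mono) auto
  also have "\<dots> \<le> z"
    unfolding z using concave_onD[OF g(1)] assms(3-6) by blast
  finally show "(1 - m) * F e + m * F q \<le> z" .
qed

lemma DERIV_nonneg_imp_le:
  fixes f f' :: "real \<Rightarrow> real"
  assumes "a \<le> b" "\<And>y. a \<le> y \<Longrightarrow> y \<le> b \<Longrightarrow> (f has_real_derivative f' y) (at y)"
    "\<And>y. a \<le> y \<Longrightarrow> y \<le> b \<Longrightarrow> 0 \<le> f' y"
  shows "f a \<le> f b"
  using DERIV_nonneg_imp_nondecreasing[of a b f] assms by blast

lemma DERIV_nonpos_imp_ge:
  fixes f f' :: "real \<Rightarrow> real"
  assumes "a \<le> b" "\<And>y. a \<le> y \<Longrightarrow> y \<le> b \<Longrightarrow> (f has_real_derivative f' y) (at y)"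
    "\<And>y. a \<le> y \<Longrightarrow> y \<le> b \<Longrightarrow> f' y \<le> 0"
  shows "f b \<le> f a"
  using DERIV_nonpos_imp_nonincreasing[of a b f] assms by blast

lemma cos_ge_quadratic:
  fixes x :: real assumes "0 \<le> x" shows "1 - x^2/2 \<le> cos x"
proof -
  have "(\<lambda>y. cos y - 1 + y^2/2) 0 \<le> (\<lambda>y. cos y - 1 + y^2/2) x"
    by (rule DERIV_nonneg_imp_le[OF assms, of _ "\<lambda>y. y - sin y"])
      (auto intro!: derivative_eq_intros simp: sin_x_le_x)
  thus ?thesis by simp
qed

lemma sin_ge_cubic:
  fixes x :: real assumes "0 \<le> x" shows "x - x^3/6 \<le> sin x"
proof -
  have "(\<lambda>y. sin y - y + y^3/6) 0 \<le> (\<lambda>y. sin y - y + y^3/6) x"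
    by (rule DERIV_nonneg_imp_le[OF assms, of _ "\<lambda>y. cos y - 1 + y^2/2"])
      (auto intro!: derivative_eq_intros dest: cos_ge_quadratic)
  thus ?thesis by simp
qed

lemma cos_le_quartic:
  fixes x :: real assumes "0 \<le> x" shows "cos x \<le> 1 - x^2/2 + x^4/24"
proof -
  have "(\<lambda>y. 1 - y^2/2 + y^4/24 - cos y) 0 \<le> (\<lambda>y. 1 - y^2/2 + y^4/24 - cos y) x"
    by (rule DERIV_nonneg_imp_le[OF assms, of _ "\<lambda>y. sin y - y + y^3/6"])
      (auto intro!: derivative_eq_intros dest: sin_ge_cubic)
  thus ?thesis by simp
qed

lemma square_mult_cos_le_sin_square:
  fixes x :: real assumes "0 \<le> x" "x \<le> 2" shows "x^2 * cos x \<le> (sin x)^2"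
proof -
  have "x^2 \<le> 4" using assms power_mono[of x 2 2] by simp
  have "x^2 * cos x \<le> x^2 * (1 - x^2/2 + x^4/24)"
    using cos_le_quartic[OF assms(1)] by (intro mult_left_mono) auto
  also have "\<dots> = (x - x^3/6)^2 - x^4 * (12 - x^2) / 72"
    by (simp add: power2_eq_square power3_eq_cube power4_eq_xxxx field_simps)
  also have "\<dots> \<le> (x - x^3/6)^2"
    using \<open>x^2 \<le> 4\<close> by simp
  also have "\<dots> \<le> (sin x)^2"
  proof (rule power_mono[OF sin_ge_cubic[OF assms(1)]])
    have "x * x^2 \<le> x * 6" using \<open>x^2 \<le> 4\<close> assms(1) by (intro mult_left_mono) auto
    thus "0 \<le> x - x^3/6" by (simp add: power3_eq_cube power2_eq_square)
  qed
  finally show ?thesis .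
qed

lemma x_cos_le_sin:
  fixes x :: real assumes "0 \<le> x" "x \<le> pi" shows "x * cos x \<le> sin x"
proof -
  have "(\<lambda>y. sin y - y * cos y) 0 \<le> (\<lambda>y. sin y - y * cos y) x"
    by (rule DERIV_nonneg_imp_le[OF assms(1), of _ "\<lambda>y. y * sin y"])
      (use assms in \<open>auto intro!: derivative_eq_intros mult_nonneg_nonneg sin_ge_zero\<close>)
  thus ?thesis by simp
qed

lemma sin_le_tangent_line:
  fixes u x :: real
  assumes "0 \<le> u" "u \<le> pi" "0 \<le> x" "x \<le> pi"
  shows "sin u \<le> sin x + cos x * (u - x)"
proof -
  let ?g = "\<lambda>y. sin x + cos x * (y - x) - sin y"
  have "?g x \<le> ?g u"
  proof (cases "x \<le> u")
    case True
    show ?thesis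
      by (rule DERIV_nonneg_imp_le[OF True, of _ "\<lambda>y. cos x - cos y"])
        (use assms in \<open>auto intro!: derivative_eq_intros cos_monotone_0_pi_le\<close>)
  next
    case False
    show ?thesis
      by (rule DERIV_nonpos_imp_ge[of u x _ "\<lambda>y. cos x - cos y"])
        (use assms False in \<open>auto intro!: derivative_eq_intros cos_monotone_0_pi_le\<close>)
  qed
  thus ?thesis by simp
qed

lemma one_le_tan_div_self:
  fixes x :: real
  assumes "0 < x" "x < pi / 2"
  shows "1 \<le> tan x / x"
  using assms abs_tan_ge[of x] tan_pos_pi2_le[of x] by simp

section \<open>A function that is convex, then concave\<close>

context
  fixes E E' E'' :: "real \<Rightarrow> real" and a b x :: real
  assumes E: "\<And>y. a \<le> y \<Longrightarrow> y \<le> b \<Longrightarrow> (E has_real_derivative E' y) (at y)"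
    and E': "\<And>y. a \<le> y \<Longrightarrow> y \<le> b \<Longrightarrow> (E' has_real_derivative E'' y) (at y)"
    and convex_then_concave: "\<And>v w. a \<le> v \<Longrightarrow> v \<le> w \<Longrightarrow> w \<le> b \<Longrightarrow> 0 < E'' w \<Longrightarrow> 0 < E'' v"
    and double_zero: "a < x" "x \<le> b" "E x = 0" "E' x = 0"
    and left_end: "E a \<le> 0"
begin

private lemma deriv_le_where_convex:
  assumes "a \<le> v" "v \<le> w" "w \<le> b" "0 < E'' w"
  shows "E' v \<le> E' w"
proof (rule DERIV_nonneg_imp_le[OF assms(2)])
  fix y assume "v \<le> y" "y \<le> w"
  with assms show "(E' has_real_derivative E'' y) (at y)" "0 \<le> E'' y"
    using E' convex_then_concave[of y w] by auto
qed

private lemma deriv_ge_where_concave: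
  assumes "a \<le> v" "v \<le> w" "w \<le> b" "E'' v \<le> 0"
  shows "E' w \<le> E' v"
proof (rule DERIV_nonpos_imp_ge[OF assms(2)])
  fix y assume "v \<le> y" "y \<le> w"
  with assms show "(E' has_real_derivative E'' y) (at y)" "E'' y \<le> 0"
    using E' convex_then_concave[of v y] by force+
qed

private lemma second_deriv_nonpos_at_double_zero: "E'' x \<le> 0"
proof (rule ccontr)
  assume convex_at_x: "\<not> E'' x \<le> 0"
  have E'_neg: "E' y < 0" if "a \<le> y" "y < x" for y
  proof -
    have "E' y < E' x"
    proof (rule DERIV_pos_imp_increasing[OF that(2)])
      fix z assume "y \<le> z" "z \<le> x"
      with that double_zero convex_at_x show "\<exists>l. (E' has_real_derivative l) (at z) \<and> 0 < l"
        using E'[of z] convex_then_concave[of z x] by auto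
    qed
    with double_zero show ?thesis by simp
  qed
  have "E ((a + x) / 2) < E a"
  proof (rule DERIV_neg_imp_decreasing[of a "(a + x) / 2" E])
    fix z assume "a \<le> z" "z \<le> (a + x) / 2"
    with double_zero show "\<exists>l. (E has_real_derivative l) (at z) \<and> l < 0"
      using E[of z] E'_neg[of z] by auto
  qed (use double_zero in simp)
  moreover have "E x \<le> E ((a + x) / 2)"
  proof (rule DERIV_nonpos_imp_ge[of _ x E E'])
    fix y assume "(a + x) / 2 \<le> y" "y \<le> x"
    with double_zero show "(E has_real_derivative E' y) (at y)" "E' y \<le> 0"
      using E E'_neg[of y] by (auto simp: le_less)
  qed (use double_zero in simp)
  ultimately show False using double_zero left_end by linarith
qed

lemma convex_concave_nonpos_if_double_zero:
  assumes u: "a \<le> u" "u \<le> b"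
  shows "E u \<le> 0"
proof (cases "x \<le> u")
  case True
  have "E u \<le> E x"
  proof (rule DERIV_nonpos_imp_ge[OF True])
    fix y assume "x \<le> y" "y \<le> u"
    with u double_zero show "(E has_real_derivative E' y) (at y)" "E' y \<le> 0"
      using E deriv_ge_where_concave[OF _ _ _ second_deriv_nonpos_at_double_zero, of y] by auto
  qed
  with double_zero show ?thesis by simp
next
  case u_le_x: False
  show ?thesis
  proof (cases "\<forall>v. u \<le> v \<and> v \<le> x \<longrightarrow> 0 \<le> E' v")
    case True
    have "E u \<le> E x"
    proof (rule DERIV_nonneg_imp_le[of u x E E'])
      fix y assume "u \<le> y" "y \<le> x"
      with u double_zero True show "(E has_real_derivative E' y) (at y)" "0 \<le> E' y"
        using E by auto
    qed (use u_le_x in simp)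
    with double_zero show ?thesis by simp
  next
    case False
    then obtain v where v: "u \<le> v" "v \<le> x" "E' v < 0" by auto
    have "0 < E'' v"
      using deriv_ge_where_concave[of v x] v u double_zero by fastforce
    have "E u \<le> E a"
    proof (rule DERIV_nonpos_imp_ge[OF u(1)])
      fix y assume "a \<le> y" "y \<le> u"
      with u v double_zero show "(E has_real_derivative E' y) (at y)" "E' y \<le> 0"
        using E deriv_le_where_convex[of y v] \<open>0 < E'' v\<close> by auto
    qed
    with left_end show ?thesis by simp
  qed
qed

end

lemma sqrt_sin_quadratic_derivatives:
  fixes d u :: real
  assumes "d \<noteq> 0"
  defines "N \<equiv> \<lambda>u. sqrt ((sin u + d)^2 + (sin u)^2)"
  shows "(N has_real_derivative (2 * sin u + d) * cos u / N u) (at u)"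
    and "((\<lambda>u. (2 * sin u + d) * cos u / N u) has_real_derivative
          (d^2 * (cos u)^2 - (2 * sin u + d) * sin u * (N u)^2) / (N u)^3) (at u)"
proof -
  have Q_pos: "0 < (sin v + d)^2 + (sin v)^2" for v
    using assms(1) by (cases "sin v = 0") (auto intro: add_nonneg_pos add_pos_nonneg)
  have N_pos: "0 < N v" and N_sq: "(N v)^2 = (sin v + d)^2 + (sin v)^2" for v
    unfolding N_def using Q_pos[of v] by auto
  show N': "(N has_real_derivative (2 * sin u + d) * cos u / N u) (at u)"
    unfolding N_def using Q_pos[of u]
    by (auto intro!: derivative_eq_intros simp: field_simps power2_eq_square)
  have "((\<lambda>u. (2 * sin u + d) * cos u / N u) has_real_derivative
         ((2 * cos u * cos u - (2 * sin u + d) * sin u) * N u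
          - (2 * sin u + d) * cos u * ((2 * sin u + d) * cos u / N u)) / (N u * N u)) (at u)"
    using N_pos[of u] by (auto intro!: derivative_eq_intros N')
  moreover have "((2 * cos u * cos u - (2 * sin u + d) * sin u) * N u
          - (2 * sin u + d) * cos u * ((2 * sin u + d) * cos u / N u)) / (N u * N u)
       = (d^2 * (cos u)^2 - (2 * sin u + d) * sin u * (N u)^2) / (N u)^3"
    using N_pos[of u] N_sq[of u]
    by (simp add: field_simps power2_eq_square power3_eq_cube) algebra
  ultimately show "((\<lambda>u. (2 * sin u + d) * cos u / N u) has_real_derivative
          (d^2 * (cos u)^2 - (2 * sin u + d) * sin u * (N u)^2) / (N u)^3) (at u)"
    by simp
qed

lemma sin_quadratic_curvature_antimono:
  fixes d v w :: real
  assumes "0 \<le> d" "0 \<le> v" "v \<le> w" "w \<le> pi/2"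
  shows "d^2 * (cos w)^2 - (2 * sin w + d) * sin w * ((sin w + d)^2 + (sin w)^2)
       \<le> d^2 * (cos v)^2 - (2 * sin v + d) * sin v * ((sin v + d)^2 + (sin v)^2)"
proof -
  have "cos w \<le> cos v" "0 \<le> cos w" "sin v \<le> sin w" "0 \<le> sin v"
    using assms by (auto intro: cos_monotone_0_pi_le cos_ge_zero sin_monotone_2pi_le sin_ge_zero)
  hence "d^2 * (cos w)^2 \<le> d^2 * (cos v)^2"
    "(2 * sin v + d) * sin v * ((sin v + d)^2 + (sin v)^2)
       \<le> (2 * sin w + d) * sin w * ((sin w + d)^2 + (sin w)^2)"
    using assms(1) by (auto intro!: mult_mono add_mono power_mono mult_left_mono)
  thus ?thesis by linarith
qed

lemma sqrt_sin_quadratic_le_tangent_line: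
  fixes d a0 a1 x u :: real
  assumes "0 < d" "d \<le> a0" "0 < x" "x \<le> pi/2"
    and "sqrt ((sin x + d)^2 + (sin x)^2) = a0 + a1 * x"
      "(2 * sin x + d) * cos x / sqrt ((sin x + d)^2 + (sin x)^2) = a1"
    and "0 \<le> u" "u \<le> pi/2"
  shows "sqrt ((sin u + d)^2 + (sin u)^2) \<le> a0 + a1 * u"
proof -
  define N where "N = (\<lambda>u. sqrt ((sin u + d)^2 + (sin u)^2))"
  define P where "P = (\<lambda>u. d^2 * (cos u)^2 - (2 * sin u + d) * sin u * (N u)^2)"
  have N_pos: "0 < N v" for v
    unfolding N_def using \<open>0 < d\<close> by (cases "sin v = 0") (auto intro: add_nonneg_pos add_pos_nonneg)
  have N': "(N has_real_derivative (2 * sin y + d) * cos y / N y) (at y)" for y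
    unfolding N_def using sqrt_sin_quadratic_derivatives(1)[of d y] \<open>0 < d\<close> by simp
  have F': "((\<lambda>u. (2 * sin u + d) * cos u / N u) has_real_derivative P y / (N y)^3) (at y)" for y
    unfolding N_def P_def using sqrt_sin_quadratic_derivatives(2)[of d y] \<open>0 < d\<close> by simp
  have "N u - a0 - a1 * u \<le> 0"
  proof (rule convex_concave_nonpos_if_double_zero[where E = "\<lambda>u. N u - a0 - a1 * u"
        and E' = "\<lambda>u. (2 * sin u + d) * cos u / N u - a1" and E'' = "\<lambda>u. P u / (N u)^3"
        and a = 0 and b = "pi/2" and x = x])
    fix y
    show "((\<lambda>u. N u - a0 - a1 * u) has_real_derivative (2 * sin y + d) * cos y / N y - a1) (at y)"
      by (auto intro!: derivative_eq_intros N')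
    show "((\<lambda>u. (2 * sin u + d) * cos u / N u - a1) has_real_derivative P y / (N y)^3) (at y)"
      using DERIV_diff[OF F' DERIV_const[of a1]] by simp
  next
    fix v w assume "0 \<le> v" "v \<le> w" "w \<le> pi/2" "0 < P w / (N w)^3"
    moreover have "P w \<le> P v"
      unfolding P_def N_def using sin_quadratic_curvature_antimono[of d v w] calculation \<open>0 < d\<close>
      by simp
    ultimately show "0 < P v / (N v)^3"
      using N_pos[of v] N_pos[of w] by (simp add: zero_less_divide_iff)
  qed (use assms in \<open>auto simp: N_def\<close>)
  thus ?thesis unfolding N_def by simp
qed

lemma two_sqrt_two_eq: "2 * sqrt 2 = sqrt (8::real)"
  using real_sqrt_mult[of 4 2] by simp

lemma square_le_eight:
  fixes s :: real
  assumes "0 \<le> s" "s \<le> 2 * sqrt 2"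
  shows "s^2 \<le> 8"
  using assms real_sqrt_le_iff[of "s^2" 8] unfolding two_sqrt_two_eq by simp

lemma polar_coordinates_of_second_coordinate:
  fixes s :: real
  assumes "2 \<le> s" "s \<le> 2 * sqrt 2"
  defines "c \<equiv> s / (2 * sqrt 2)" and "sn \<equiv> sqrt (8 - s^2) / (2 * sqrt 2)"
  shows "c^2 + sn^2 = 1" "0 \<le> sn" "sn \<le> c" "c \<le> 1" "0 < sn \<longleftrightarrow> s < 2 * sqrt 2"
proof -
  have s_sq: "s^2 \<le> 8" using assms(1,2) by (intro square_le_eight) auto
  have "2^2 \<le> s^2" using assms(1) by (intro power_mono) auto
  hence "8 - s^2 \<le> s^2" by simp
  show "c^2 + sn^2 = 1"
    unfolding c_def sn_def using s_sq by (simp add: power_divide power_mult_distrib diff_divide_distrib)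
  show "0 \<le> sn" "c \<le> 1" unfolding c_def sn_def using assms(2) s_sq by auto
  have "sqrt (8 - s^2) \<le> s"
    using \<open>8 - s^2 \<le> s^2\<close> assms(1) by (intro real_le_lsqrt) auto
  thus "sn \<le> c"
    unfolding c_def sn_def by (intro divide_right_mono) auto
  have "s < 2 * sqrt 2 \<longleftrightarrow> s^2 < 8"
    using assms(1) real_sqrt_less_iff[of "s^2" 8] unfolding two_sqrt_two_eq by simp
  thus "0 < sn \<longleftrightarrow> s < 2 * sqrt 2"
    unfolding sn_def by (simp add: zero_less_divide_iff)
qed

lemma RR_eq_sin_mult:
  "RR (t, s) = sin (pi / 2 * t) * (s / (2 * sqrt 2) + sqrt (8 - s^2) / (2 * sqrt 2))"
  unfolding RR_def by (simp add: add_divide_distrib[symmetric])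

lemma RR_scaled_second_coordinate:
  "RR (t, 2 * sqrt 2 * g) = sin (pi / 2 * t) * (g + sqrt (1 - g^2))"
proof -
  have "sqrt (8 - (2 * sqrt 2 * g)^2) = 2 * sqrt 2 * sqrt (1 - g^2)"
    unfolding two_sqrt_two_eq real_sqrt_mult[symmetric] by (simp add: algebra_simps)
  thus ?thesis unfolding RR_eq_sin_mult by simp
qed

lemma RR_le_two: "y \<in> domR \<Longrightarrow> RR y \<le> 2"
proof -
  assume "y \<in> domR"
  then obtain t s where y: "y = (t, s)" "2 \<le> s" "s \<le> 2 * sqrt 2" unfolding domR_def by auto
  note polar = polar_coordinates_of_second_coordinate[OF y(2,3)]
  have "sqrt (8 - s^2) / (2 * sqrt 2) \<le> 1" using polar(3,4) by linarith
  hence "sin (pi / 2 * t) * (s / (2 * sqrt 2) + sqrt (8 - s^2) / (2 * sqrt 2)) \<le> 1 * (1 + 1)"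
    using polar(2,4) y(2) by (intro mult_mono add_mono) auto
  thus ?thesis unfolding y RR_eq_sin_mult by simp
qed

lemma sum_products_le_sqrt_sum_squares:
  fixes a b c s :: real
  assumes "c^2 + s^2 = 1"
  shows "a * c + b * s \<le> sqrt (a^2 + b^2)"
proof (rule real_le_rsqrt)
  have "(a * c + b * s)^2 + (a * s - b * c)^2 = (a^2 + b^2) * (c^2 + s^2)"
    by (simp add: power2_eq_square algebra_simps)
  with assms have "(a * c + b * s)^2 + (a * s - b * c)^2 = a^2 + b^2" by simp
  thus "(a * c + b * s)^2 \<le> a^2 + b^2"
    using zero_le_power2[of "a * s - b * c"] by linarith
qed

lemma convex_combination_sqrt_diff_square_le:
  fixes a b m n k :: real
  assumes "a^2 \<le> k" "b^2 \<le> k" "0 \<le> m" "0 \<le> n" "m + n = 1"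
  shows "m * sqrt (k - a^2) + n * sqrt (k - b^2) \<le> sqrt (k - (m * a + n * b)^2)"
proof (rule real_le_rsqrt)
  define A B where "A = sqrt (k - a^2)" and "B = sqrt (k - b^2)"
  have A2: "A^2 = k - a^2" and B2: "B^2 = k - b^2" unfolding A_def B_def using assms by auto
  have "2 * (A * B + a * b) \<le> A^2 + B^2 + a^2 + b^2"
    using sum_squares_ge_zero[of "A - B" "a - b"] by (simp add: power2_eq_square algebra_simps)
  hence "2 * m * n * (A * B + a * b) \<le> 2 * m * n * k"
    using A2 B2 assms(3,4) by (intro mult_left_mono) auto
  have "(m * A + n * B)^2 + (m * a + n * b)^2
      = m^2 * (A^2 + a^2) + n^2 * (B^2 + b^2) + 2 * m * n * (A * B + a * b)"
    by (simp add: power2_eq_square algebra_simps)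
  also have "\<dots> \<le> m^2 * k + n^2 * k + 2 * m * n * k"
    using A2 B2 \<open>2 * m * n * (A * B + a * b) \<le> 2 * m * n * k\<close> by simp
  also have "\<dots> = k * (m + n)^2" by (simp add: power2_eq_square algebra_simps)
  finally show "(m * A + n * B)^2 \<le> k - (m * a + n * b)^2"
    using assms(5) by simp
qed

lemma concave_on_affine_plus_sqrt_diff_square:
  fixes S :: "(real \<times> real) set" and k K B C D :: real
  assumes "convex S" "\<And>y. y \<in> S \<Longrightarrow> (snd y)^2 \<le> k" "0 \<le> D"
  shows "concave_on S (\<lambda>y. K + B * fst y + C * snd y + D * sqrt (k - (snd y)^2))"
  unfolding concave_on_iff
proof (intro conjI assms(1) ballI allI impI)
  fix p q :: "real \<times> real" and m n :: real
  assume pq: "p \<in> S" "q \<in> S" and mn: "0 \<le> m" "0 \<le> n" "m + n = 1"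
  have "m * (K + B * fst p + C * snd p + D * sqrt (k - (snd p)^2))
      + n * (K + B * fst q + C * snd q + D * sqrt (k - (snd q)^2))
      = (m + n) * K + B * (m * fst p + n * fst q) + C * (m * snd p + n * snd q)
        + D * (m * sqrt (k - (snd p)^2) + n * sqrt (k - (snd q)^2))"
    by (simp only: algebra_simps)
  also have "\<dots> \<le> K + B * (m * fst p + n * fst q) + C * (m * snd p + n * snd q)
        + D * sqrt (k - (m * snd p + n * snd q)^2)"
    using convex_combination_sqrt_diff_square_le[OF assms(2)[OF pq(1)] assms(2)[OF pq(2)] mn]
      assms(3) mn(3) by (simp add: mult_left_mono)
  finally show "m * (K + B * fst p + C * snd p + D * sqrt (k - (snd p)^2))
      + n * (K + B * fst q + C * snd q + D * sqrt (k - (snd q)^2))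
    \<le> K + B * fst (m *\<^sub>R p + n *\<^sub>R q) + C * snd (m *\<^sub>R p + n *\<^sub>R q)
      + D * sqrt (k - (snd (m *\<^sub>R p + n *\<^sub>R q))^2)"
    by simp
qed

lemma convex_domR: "convex domR"
  unfolding domR_def by (intro convex_Times convex_real_interval)

lemma domR_snd_square_le: "y \<in> domR \<Longrightarrow> (snd y)^2 \<le> 8"
  unfolding domR_def by (auto intro: square_le_eight)

section \<open>Supporting planes\<close>

definition ray_derivative :: "real \<Rightarrow> real \<Rightarrow> real \<Rightarrow> real" where
  "ray_derivative x c sn = sin x * (1 - c + sn) / sn - (c + sn) * x * cos x"

lemma RR_le_plane:
  fixes d a0 a1 :: real
  assumes line: "\<And>u. 0 \<le> u \<Longrightarrow> u \<le> pi/2 \<Longrightarrow> sqrt ((sin u + d)^2 + (sin u)^2) \<le> a0 + a1 * u"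
    and "y \<in> domR"
  shows "RR y \<le> a0 + a1 * (pi/2) * fst y - d / (2 * sqrt 2) * snd y"
proof -
  obtain t s where y: "y = (t, s)" "0 \<le> t" "t \<le> 1" "2 \<le> s" "s \<le> 2 * sqrt 2"
    using \<open>y \<in> domR\<close> unfolding domR_def by auto
  define u c sn where "u = pi/2 * t" and "c = s / (2 * sqrt 2)" and "sn = sqrt (8 - s^2) / (2 * sqrt 2)"
  note polar = polar_coordinates_of_second_coordinate[OF y(4,5), folded c_def sn_def]
  have "RR y = sin u * (c + sn)"
    unfolding y RR_eq_sin_mult u_def c_def sn_def ..
  also have "\<dots> = (sin u + d) * c + sin u * sn - d * c"
    by (simp add: algebra_simps)
  also have "\<dots> \<le> sqrt ((sin u + d)^2 + (sin u)^2) - d * c"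
    using sum_products_le_sqrt_sum_squares[OF polar(1)] by simp
  also have "\<dots> \<le> a0 + a1 * u - d * c"
    using line[of u] y(2,3) unfolding u_def by simp
  finally show ?thesis unfolding y u_def c_def by simp
qed

lemma sqrt_sin_quadratic_at_contact:
  fixes w c sn :: real
  assumes "c^2 + sn^2 = 1" "0 < sn" "0 \<le> w"
  shows "sqrt ((w + (c - sn) * w / sn)^2 + w^2) = w / sn"
proof -
  have "(w + (c - sn) * w / sn)^2 + w^2 = w^2 * (c^2 + sn^2) / sn^2"
    using assms(2) by (simp add: field_simps power2_eq_square)
  also have "\<dots> = (w / sn)^2" using assms(1) by (simp add: power_divide)
  finally show ?thesis using assms(2,3) by simp
qed

lemma sqrt_sin_quadratic_le_support_line:
  fixes x c sn u :: real
  assumes x: "0 < x" "x \<le> pi/2" and cs: "c^2 + sn^2 = 1" "0 < sn" "sn \<le> c"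
    and nonneg: "0 \<le> ray_derivative x c sn" and u: "0 \<le> u" "u \<le> pi/2"
  shows "sqrt ((sin u + (c - sn) * sin x / sn)^2 + (sin u)^2)
           \<le> sin x / sn + (c + sn) * cos x * (u - x)"
proof (cases "sn = c")
  case True
  have "sqrt ((sin u + (c - sn) * sin x / sn)^2 + (sin u)^2) = sin u / sn"
    using sqrt_sin_quadratic_at_contact[OF cs(1,2), of "sin u"] True u by (simp add: sin_ge_zero)
  also have "\<dots> \<le> (sin x + cos x * (u - x)) / sn"
    using sin_le_tangent_line[of u x] u x cs(2) by (simp add: divide_right_mono)
  also have "c + sn = 1 / sn"
    using True cs(1,2) by (simp add: field_simps power2_eq_square)
  hence "(sin x + cos x * (u - x)) / sn = sin x / sn + (c + sn) * cos x * (u - x)"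
    by (simp add: add_divide_distrib)
  finally show ?thesis .
next
  case False
  have "0 < sin x" using x by (intro sin_gt_zero) auto
  note contact = sqrt_sin_quadratic_at_contact[OF cs(1,2) less_imp_le[OF \<open>0 < sin x\<close>]]
  have "sqrt ((sin u + (c - sn) * sin x / sn)^2 + (sin u)^2)
      \<le> (sin x / sn - (c + sn) * x * cos x) + (c + sn) * cos x * u"
  proof (rule sqrt_sin_quadratic_le_tangent_line[OF _ _ x _ _ u])
    show "0 < (c - sn) * sin x / sn" using False cs \<open>0 < sin x\<close> by simp
    have "ray_derivative x c sn = (sin x / sn - (c + sn) * x * cos x) - (c - sn) * sin x / sn"
      unfolding ray_derivative_def using cs(2) by (simp add: field_simps)
    with nonneg show "(c - sn) * sin x / sn \<le> sin x / sn - (c + sn) * x * cos x"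
      by simp
    show "sqrt ((sin x + (c - sn) * sin x / sn)^2 + (sin x)^2)
        = sin x / sn - (c + sn) * x * cos x + (c + sn) * cos x * x"
      unfolding contact by simp
    show "(2 * sin x + (c - sn) * sin x / sn) * cos x
        / sqrt ((sin x + (c - sn) * sin x / sn)^2 + (sin x)^2) = (c + sn) * cos x"
      unfolding contact using cs(2) \<open>0 < sin x\<close> by (simp add: field_simps)
  qed
  thus ?thesis by (simp add: algebra_simps)
qed

lemma support_plane_value_at_contact:
  fixes c sn w :: real
  assumes "c^2 + sn^2 = 1" "sn \<noteq> 0"
  shows "w / sn - (c - sn) * w / sn * c = w * (c + sn)"
proof -
  have "w / sn - (c - sn) * w / sn * c = w * (1 - c^2 + c * sn) / sn"
    using assms(2) by (simp add: field_simps power2_eq_square)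
  also have "\<dots> = w * (sn^2 + c * sn) / sn"
    using assms(1) by (simp add: eq_diff_eq)
  also have "\<dots> = w * (c + sn)"
    using assms(2) by (simp add: field_simps power2_eq_square)
  finally show ?thesis .
qed

lemma concave_envelope_RR_eq_if_ray_derivative_nonneg:
  fixes t s :: real
  assumes t: "0 < t" "t \<le> 1" and s: "2 \<le> s" "s < 2 * sqrt 2"
  defines "x \<equiv> pi/2 * t" and "c \<equiv> s / (2 * sqrt 2)" and "sn \<equiv> sqrt (8 - s^2) / (2 * sqrt 2)"
  assumes nonneg: "0 \<le> ray_derivative x c sn"
  shows "concave_envelope domR RR (t, s) = RR (t, s)"
proof -
  note polar = polar_coordinates_of_second_coordinate[OF s(1) less_imp_le[OF s(2)], folded c_def sn_def]
  have "0 < sn" using polar(5) s(2) by simp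
  have x: "0 < x" "x \<le> pi/2" unfolding x_def using t by auto
  define d where "d = (c - sn) * sin x / sn"
  define plane where "plane = (\<lambda>y::real \<times> real.
    (sin x / sn - (c + sn) * x * cos x) + (c + sn) * cos x * (pi/2) * fst y - d / (2 * sqrt 2) * snd y)"
  show ?thesis
  proof (rule concave_envelope_eqI)
    show "(t, s) \<in> domR" unfolding domR_def using t s by auto
    have plane_eq: "plane = (\<lambda>y. (sin x / sn - (c + sn) * x * cos x) + ((c + sn) * cos x * (pi/2)) * fst y
        + (- (d / (2 * sqrt 2))) * snd y + 0 * sqrt (8 - (snd y)^2))"
      unfolding plane_def by auto
    show "concave_on domR plane"
      unfolding plane_eq
      by (intro concave_on_affine_plus_sqrt_diff_square convex_domR domR_snd_square_le order_refl)
    fix y assume "y \<in> domR"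
    show "RR y \<le> plane y"
      unfolding plane_def
    proof (rule RR_le_plane[OF _ \<open>y \<in> domR\<close>])
      fix u :: real assume "0 \<le> u" "u \<le> pi/2"
      from sqrt_sin_quadratic_le_support_line[OF x polar(1) \<open>0 < sn\<close> polar(3) nonneg this]
      show "sqrt ((sin u + d)^2 + (sin u)^2) \<le> sin x / sn - (c + sn) * x * cos x + (c + sn) * cos x * u"
        unfolding d_def by (simp add: algebra_simps)
    qed
  next
    have "plane (t, s) = sin x / sn - d * c"
      unfolding plane_def x_def c_def by (simp add: algebra_simps)
    also have "\<dots> = sin x * (c + sn)"
      unfolding d_def using support_plane_value_at_contact[OF polar(1)] \<open>0 < sn\<close> by simp
    finally show "plane (t, s) = RR (t, s)" unfolding RR_eq_sin_mult x_def c_def sn_def .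
  qed
qed

lemma concave_envelope_RR_eq_at_top_edge:
  fixes t :: real
  assumes t: "0 < t" "t \<le> 1"
  shows "concave_envelope domR RR (t, 2 * sqrt 2) = RR (t, 2 * sqrt 2)"
proof -
  define x where "x = pi / 2 * t"
  have x: "0 \<le> x" "x \<le> pi" unfolding x_def using t by auto
  define plane where "plane = (\<lambda>y::real \<times> real. (sin x - x * cos x) + (cos x * (pi / 2)) * fst y
    + 0 * snd y + (1 / (2 * sqrt 2)) * sqrt (8 - (snd y)^2))"
  show ?thesis
  proof (rule concave_envelope_eqI)
    show "(t, 2 * sqrt 2) \<in> domR" unfolding domR_def using t by auto
    show "concave_on domR plane"
      unfolding plane_def
      by (intro concave_on_affine_plus_sqrt_diff_square convex_domR domR_snd_square_le) simp_all
    fix y assume "y \<in> domR"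
    then obtain t' s' where y: "y = (t', s')" "0 \<le> t'" "t' \<le> 1" "2 \<le> s'" "s' \<le> 2 * sqrt 2"
      unfolding domR_def by auto
    define u c sn where "u = pi / 2 * t'" and "c = s' / (2 * sqrt 2)"
      and "sn = sqrt (8 - s'^2) / (2 * sqrt 2)"
    note polar = polar_coordinates_of_second_coordinate[OF y(4,5), folded c_def sn_def]
    have u: "0 \<le> u" "u \<le> pi" and "sin u \<le> 1" "0 \<le> sin u"
      unfolding u_def using y(2,3) by (auto intro: sin_ge_zero)
    have "RR y = sin u * c + sin u * sn"
      unfolding y RR_eq_sin_mult u_def c_def sn_def by (simp add: algebra_simps)
    also have "\<dots> \<le> sin u + sn"
      using mult_left_le[OF polar(4) \<open>0 \<le> sin u\<close>]
        mult_left_le_one_le[OF polar(2) \<open>0 \<le> sin u\<close> \<open>sin u \<le> 1\<close>]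
      by linarith
    also have "\<dots> \<le> sin x + cos x * (u - x) + sn"
      using sin_le_tangent_line[OF u x] by simp
    also have "\<dots> = plane y"
      unfolding plane_def y u_def sn_def by (simp add: algebra_simps)
    finally show "RR y \<le> plane y" .
  next
    show "plane (t, 2 * sqrt 2) = RR (t, 2 * sqrt 2)"
      unfolding plane_def RR_eq_sin_mult x_def by (simp add: power_mult_distrib)
  qed
qed

section \<open>Points where the envelope lies strictly above \<open>RR\<close>\<close>

lemma RR_along_ray_has_derivative:
  fixes t c :: real
  assumes "c^2 < 1"
  shows "((\<lambda>m. m * RR (t / m, 2 * sqrt 2 * (1 - (1 - c) / m)))
           has_real_derivative ray_derivative (pi / 2 * t) c (sqrt (1 - c^2))) (at 1)"
proof -
  define sn where "sn = sqrt (1 - c^2)"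
  have "0 < sn" and sn_sq: "sn^2 = 1 - c^2" unfolding sn_def using assms by auto
  have "((\<lambda>m. m * (sin (pi / 2 * (t / m)) * ((1 - (1 - c) / m) + sqrt (1 - (1 - (1 - c) / m)^2))))
     has_real_derivative
       1 * (sin (pi / 2 * t) * (c + sn))
       + (cos (pi / 2 * t) * (- (pi / 2 * t)) * (c + sn)
          + sin (pi / 2 * t) * ((1 - c) + inverse sn / 2 * (- (2 * c * (1 - c)))))) (at 1)"
    using assms unfolding sn_def
    by (auto intro!: derivative_eq_intros simp: power2_eq_square algebra_simps)
  moreover have "1 * (sin (pi / 2 * t) * (c + sn))
       + (cos (pi / 2 * t) * (- (pi / 2 * t)) * (c + sn)
          + sin (pi / 2 * t) * ((1 - c) + inverse sn / 2 * (- (2 * c * (1 - c)))))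
     = ray_derivative (pi / 2 * t) c sn"
    unfolding ray_derivative_def using \<open>0 < sn\<close> sn_sq
    by (simp add: field_simps power2_eq_square) algebra
  ultimately show ?thesis
    unfolding RR_scaled_second_coordinate sn_def by simp
qed

lemma RR_along_ray_le_concave_envelope:
  fixes t c m :: real
  assumes "0 < t" "t \<le> m" "m \<le> 1" "c \<le> 1" "(1 - c) / m \<le> 1 - 1 / sqrt 2"
  shows "m * RR (t / m, 2 * sqrt 2 * (1 - (1 - c) / m)) \<le> concave_envelope domR RR (t, 2 * sqrt 2 * c)"
proof -
  define e q where "e = (0 :: real, 2 * sqrt 2)" and "q = (t / m, 2 * sqrt 2 * (1 - (1 - c) / m))"
  have "e \<in> domR" unfolding e_def domR_def by auto
  have "q \<in> domR"
    unfolding q_def domR_def using assms by (auto simp: field_simps)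
  have "(t, 2 * sqrt 2 * c) = (1 - m) *\<^sub>R e + m *\<^sub>R q"
    unfolding e_def q_def using assms(1,2) by (simp add: field_simps)
  moreover have "RR e = 0" unfolding e_def RR_def by simp
  ultimately show ?thesis
    using concave_envelope_ge_convex_combination[OF convex_domR _ \<open>e \<in> domR\<close> \<open>q \<in> domR\<close>,
        of RR 2 m] RR_le_two assms(1-3) unfolding q_def by simp
qed

lemma RR_lt_concave_envelope_if_ray_derivative_neg:
  fixes t s :: real
  assumes t: "0 < t" "t < 1" and s: "2 < s" "s < 2 * sqrt 2"
  defines "x \<equiv> pi/2 * t" and "c \<equiv> s / (2 * sqrt 2)" and "sn \<equiv> sqrt (8 - s^2) / (2 * sqrt 2)"
  assumes neg: "ray_derivative x c sn < 0"
  shows "RR (t, s) < concave_envelope domR RR (t, s)"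
proof -
  note polar = polar_coordinates_of_second_coordinate[OF less_imp_le[OF s(1)] less_imp_le[OF s(2)],
      folded c_def sn_def]
  define h where "h = (\<lambda>m. m * RR (t / m, 2 * sqrt 2 * (1 - (1 - c) / m)))"
  have sn_eq: "sqrt (1 - c^2) = sn" using polar(1,2) by (simp add: eq_diff_eq real_sqrt_unique)
  have "0 < sn^2" using polar(5) s(2) by simp
  hence "c^2 < 1" using polar(1) by linarith
  hence "(h has_real_derivative ray_derivative x c sn) (at 1)"
    unfolding h_def x_def sn_eq[symmetric] by (rule RR_along_ray_has_derivative)
  then obtain \<delta> where "0 < \<delta>" and \<delta>: "\<And>k. 0 < k \<Longrightarrow> k < \<delta> \<Longrightarrow> h 1 < h (1 - k)"
    using DERIV_neg_dec_left[OF _ neg] by blast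
  define m0 where "m0 = (1 - c) / (1 - 1 / sqrt 2)"
  have "1 / sqrt 2 < c"
    unfolding c_def using s(1) by (simp add: field_simps)
  hence "m0 < 1" unfolding m0_def by (simp add: divide_less_eq)
  define k where "k = min (\<delta> / 2) (min ((1 - t) / 2) ((1 - m0) / 2))"
  have k: "0 < k" "k < \<delta>" "k \<le> (1 - t) / 2" "k \<le> (1 - m0) / 2"
    unfolding k_def using \<open>0 < \<delta>\<close> t \<open>m0 < 1\<close> by (auto simp: min_def)
  define m where "m = 1 - k"
  have m: "t < m" "m0 < m" "m < 1" and "h 1 < h m"
    unfolding m_def using k t \<open>m0 < 1\<close> \<delta>[OF k(1,2)] by auto
  have "(1 - c) / m \<le> 1 - 1 / sqrt 2"
    using m \<open>m0 < 1\<close> t polar(4) unfolding m0_def by (simp add: field_simps)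
  hence "h m \<le> concave_envelope domR RR (t, s)"
    using RR_along_ray_le_concave_envelope[of t m c] t m polar(4) unfolding h_def c_def by simp
  moreover have "h 1 = RR (t, s)" unfolding h_def c_def by simp
  ultimately show ?thesis using \<open>h 1 < h m\<close> by simp
qed

section \<open>The contact condition\<close>

lemma le_one_if_sum_squares_eq_one:
  fixes c s :: real
  assumes "c^2 + s^2 = 1"
  shows "c \<le> 1"
proof -
  have "c^2 \<le> 1" using assms zero_le_power2[of s] by linarith
  thus ?thesis unfolding abs_square_le_1 by simp
qed

lemma ray_derivative_nonneg_iff_tan_ratio:
  fixes x c sn :: real
  assumes x: "0 < x" "x < pi / 2" and cs: "c^2 + sn^2 = 1" "0 < c" "0 < sn"
  defines "\<epsilon> \<equiv> 1 - c"
  shows "0 \<le> ray_derivative x c sn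
     \<longleftrightarrow> (2 + sqrt ((2 - \<epsilon>) * \<epsilon>) - \<epsilon> * (5 - 2 * \<epsilon>)) / (2 * (1 - \<epsilon>)) \<le> tan x / x"
proof -
  define K where "K = (2 + sn - \<epsilon> * (5 - 2 * \<epsilon>)) / (2 * c)"
  have "sqrt ((2 - \<epsilon>) * \<epsilon>) = sn"
    using cs unfolding \<epsilon>_def by (simp add: real_sqrt_unique power2_eq_square algebra_simps)
  hence ratio: "(2 + sqrt ((2 - \<epsilon>) * \<epsilon>) - \<epsilon> * (5 - 2 * \<epsilon>)) / (2 * (1 - \<epsilon>)) = K"
    unfolding K_def \<epsilon>_def by simp
  have "(1 - c + sn) * (2 + sn - \<epsilon> * (5 - 2 * \<epsilon>)) = (c + sn) * (2 * c * sn)"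
    using cs(1) unfolding \<epsilon>_def by algebra
  hence "(1 - c + sn) / sn * K = c + sn"
    unfolding K_def using cs(2,3) by (simp add: field_simps)
  hence "ray_derivative x c sn = sin x * (1 - c + sn) / sn - ((1 - c + sn) / sn * K) * x * cos x"
    unfolding ray_derivative_def by simp
  also have "\<dots> = (1 - c + sn) / sn * (sin x - K * (x * cos x))"
    by (simp add: algebra_simps)
  finally have "ray_derivative x c sn = (1 - c + sn) / sn * (sin x - K * (x * cos x))" .
  moreover have "0 < (1 - c + sn) / sn"
    using le_one_if_sum_squares_eq_one[OF cs(1)] cs(3) by simp
  moreover have "0 < x * cos x" using x by (simp add: cos_gt_zero)
  ultimately have "0 \<le> ray_derivative x c sn \<longleftrightarrow> K * (x * cos x) \<le> sin x"
    using mult_le_cancel_left_pos[of "(1 - c + sn) / sn" 0 "sin x - K * (x * cos x)"] by simp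
  also have "\<dots> \<longleftrightarrow> K \<le> sin x / (x * cos x)"
    using \<open>0 < x * cos x\<close> by (simp add: le_divide_eq)
  finally show ?thesis unfolding ratio by (simp add: tan_def mult.commute)
qed

lemma ray_derivative_nonneg_if_le_ratio:
  fixes x c sn :: real
  assumes x: "0 < x" "x \<le> pi / 2" and cs: "c^2 + sn^2 = 1" "0 < sn"
    and le: "c + sn \<le> x / sin x"
  shows "0 \<le> ray_derivative x c sn"
proof -
  have "0 < sin x" "0 \<le> cos x" using x by (auto intro: sin_gt_zero cos_ge_zero)
  have "(c + sn) * x * cos x \<le> (x / sin x) * x * cos x"
    using le x \<open>0 \<le> cos x\<close> by (intro mult_right_mono) auto
  also have "\<dots> = x^2 * cos x / sin x" by (simp add: power2_eq_square)
  also have "\<dots> \<le> (sin x)^2 / sin x"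
    using square_mult_cos_le_sin_square[of x] x pi_less_4 \<open>0 < sin x\<close>
    by (intro divide_right_mono) auto
  also have "\<dots> = sin x * 1" by (simp add: power2_eq_square)
  also have "\<dots> \<le> sin x * ((1 - c + sn) / sn)"
    using le_one_if_sum_squares_eq_one[OF cs(1)] cs(2) \<open>0 < sin x\<close> by (intro mult_left_mono) auto
  finally show ?thesis unfolding ray_derivative_def by simp
qed

lemma ray_derivative_nonneg_if_eq:
  fixes x sn :: real
  assumes "0 \<le> x" "x \<le> pi" "2 * sn^2 = 1" "0 < sn"
  shows "0 \<le> ray_derivative x sn sn"
proof -
  have "ray_derivative x sn sn = (sin x - x * cos x) / sn"
    unfolding ray_derivative_def using assms(3,4) by (simp add: field_simps power2_eq_square)
  thus ?thesis using x_cos_le_sin[OF assms(1,2)] assms(4) by simp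
qed

lemma concave_envelope_RR_eq_iff_ray_derivative_nonneg:
  fixes t s :: real
  assumes t: "0 < t" "t \<le> 1" and s: "2 \<le> s" "s < 2 * sqrt 2"
  defines "x \<equiv> pi/2 * t" and "c \<equiv> s / (2 * sqrt 2)" and "sn \<equiv> sqrt (8 - s^2) / (2 * sqrt 2)"
  shows "concave_envelope domR RR (t, s) = RR (t, s) \<longleftrightarrow> 0 \<le> ray_derivative x c sn"
proof
  show "0 \<le> ray_derivative x c sn \<Longrightarrow> concave_envelope domR RR (t, s) = RR (t, s)"
    unfolding x_def c_def sn_def by (rule concave_envelope_RR_eq_if_ray_derivative_nonneg[OF t s])
next
  assume eq: "concave_envelope domR RR (t, s) = RR (t, s)"
  note polar = polar_coordinates_of_second_coordinate[OF s(1) less_imp_le[OF s(2)], folded c_def sn_def]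
  have "0 < sn" using polar(5) s(2) by blast
  show "0 \<le> ray_derivative x c sn"
  proof (rule ccontr)
    assume neg: "\<not> 0 \<le> ray_derivative x c sn"
    have "t \<noteq> 1"
    proof
      assume "t = 1"
      hence "ray_derivative x c sn = (1 - c + sn) / sn"
        unfolding ray_derivative_def x_def by simp
      with neg polar(4) \<open>0 < sn\<close> show False by simp
    qed
    moreover have "s \<noteq> 2"
    proof
      assume "s = 2"
      hence "c = sn" unfolding c_def sn_def by simp
      with ray_derivative_nonneg_if_eq[of x sn] polar(1) \<open>0 < sn\<close> t neg show False
        unfolding x_def by simp
    qed
    ultimately have "RR (t, s) < concave_envelope domR RR (t, s)"
      using t s neg unfolding x_def c_def sn_def
      by (intro RR_lt_concave_envelope_if_ray_derivative_neg) auto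
    with eq show False by simp
  qed
qed

lemma tan_condition_iff_ray_derivative_nonneg:
  fixes t s :: real
  assumes t: "0 < t" "t \<le> 1" and s: "2 \<le> s" "s < 2 * sqrt 2"
  defines "\<epsilon> \<equiv> 1 - s / (2 * sqrt 2)" and "x \<equiv> pi / 2 * t"
    and "c \<equiv> s / (2 * sqrt 2)" and "sn \<equiv> sqrt (8 - s^2) / (2 * sqrt 2)"
  shows "(t = 1 \<or> (2 + sqrt ((2 - \<epsilon>) * \<epsilon>) - \<epsilon> * (5 - 2 * \<epsilon>)) / (2 * (1 - \<epsilon>)) \<le> tan x / x)
     \<longleftrightarrow> 0 \<le> ray_derivative x c sn"
proof -
  note polar = polar_coordinates_of_second_coordinate[OF s(1) less_imp_le[OF s(2)], folded c_def sn_def]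
  have "0 < sn" using polar(5) s(2) by blast
  show ?thesis
  proof (cases "t = 1")
    case True
    with polar(4) \<open>0 < sn\<close> show ?thesis unfolding ray_derivative_def x_def by simp
  next
    case False
    have "0 < c" unfolding c_def using s(1) by simp
    have "0 < x" "x < pi / 2" unfolding x_def using t False by auto
    from ray_derivative_nonneg_iff_tan_ratio[OF this polar(1) \<open>0 < c\<close> \<open>0 < sn\<close>] False
    show ?thesis unfolding \<epsilon>_def c_def by auto
  qed
qed

theorem mainTheorem3:
  fixes t s :: real
  assumes "0 < t" "t \<le> 1" "2 \<le> s" "s \<le> 2 * sqrt 2"
  defines "\<epsilon> \<equiv> 1 - s / (2 * sqrt 2)"
  defines "C \<equiv> (t = 1 \<or> tan (pi / 2 * t) / (pi / 2 * t)
                 \<ge> (2 + sqrt ((2 - \<epsilon>) * \<epsilon>) - \<epsilon> * (5 - 2 * \<epsilon>)) / (2 * (1 - \<epsilon>)))"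
  shows "(RR (t, s) = concave_envelope domR RR (t, s) \<longleftrightarrow> C)
         \<and> ((pi / 2 * t) / sin (pi / 2 * t) \<ge> (s + sqrt (8 - s\<^sup>2)) / (2 * sqrt 2) \<longrightarrow> C)"
proof (cases "s = 2 * sqrt 2")
  case True
  have "t \<noteq> 1 \<Longrightarrow> 1 \<le> tan (pi / 2 * t) / (pi / 2 * t)"
    using assms(1,2) by (intro one_le_tan_div_self) auto
  hence C unfolding C_def \<epsilon>_def True by auto
  thus ?thesis using concave_envelope_RR_eq_at_top_edge[OF assms(1,2)] True by simp
next
  case False
  hence s: "s < 2 * sqrt 2" using assms(4) by simp
  define x c sn where "x = pi / 2 * t" and "c = s / (2 * sqrt 2)"
    and "sn = sqrt (8 - s^2) / (2 * sqrt 2)"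
  note polar = polar_coordinates_of_second_coordinate[OF assms(3,4), folded c_def sn_def]
  have "C \<longleftrightarrow> 0 \<le> ray_derivative x c sn"
    using tan_condition_iff_ray_derivative_nonneg[OF assms(1-3) s]
    unfolding C_def \<epsilon>_def x_def c_def sn_def by auto
  moreover have "RR (t, s) = concave_envelope domR RR (t, s) \<longleftrightarrow> 0 \<le> ray_derivative x c sn"
    using concave_envelope_RR_eq_iff_ray_derivative_nonneg[OF assms(1-3) s]
    unfolding x_def c_def sn_def by auto
  moreover have "c + sn = (s + sqrt (8 - s\<^sup>2)) / (2 * sqrt 2)"
    unfolding c_def sn_def by (simp add: add_divide_distrib)
  hence "(pi / 2 * t) / sin (pi / 2 * t) \<ge> (s + sqrt (8 - s\<^sup>2)) / (2 * sqrt 2)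
      \<Longrightarrow> 0 \<le> ray_derivative x c sn"
    using ray_derivative_nonneg_if_le_ratio[of x c sn] assms(1,2) polar(1,5) s
    unfolding x_def by simp
  ultimately show ?thesis by blast
qed

end
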